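(* Let $f:\mathbb R^n\to\mathbb R$ be a lower-$\mathcal C^2$ function. Then the following are equivalent: (i) $f$ is convex on $\mathbb R^n$; (ii) for every $(u,v)\in\operatorname{gph}\partial f$, $\langle z,w\rangle\ge0$ whenever $w\in\mathbb R^n$ and $z\in\partial^2 f(u,v)(w)$; (iii) for every $(u,v)\in\operatorname{gph}\partial f$, $\langle z,w\rangle\ge0$ whenever $w\in\mathbb R^n$ and $z\in\breve\partial^2 f(u,v)(w)$.
   Context: $f:\mathbb R^n\to\mathbb R$ is lower-$\mathcal C^2$ if for each $\bar x$ there are a neighborhood $V$ of $\bar x$, a compact set $T$, and functions $f_t$ ($t\in T$) of class $\mathcal C^2$ on $V$ such that $f(x)=\max_{t\in T}f_t(x)$ for $x\in V$, with $f_t(x)$ and all partial derivatives in $x$ up to order 2 depending continuously on $(t,x)\in T\times V$. Regular subdifferential: $\widehat\partial f(\bar u)=\{v:\liminf_{u\to\bar u}\frac{f(u)-f(\bar u)-\langle v,u-\bar u\rangle}{\|u-\bar u\|}\ge0\}$. Limiting subdifferential: $v\in\partial f(\bar u)$ iff there are $u_k\to\bar u$ with $f(u_k)\to f(\bar u)$ and $v_k\in\widehat\partial f(u_k)$ with $v_k\to v$. Regular normal cone to $\Omega\subset\mathbb R^n\times\mathbb R^n$: $\widehat N(\bar p;\Omega)=\{q:\limsup_{p\to\bar p,\,p\in\Omega}\langle q,p-\bar p\rangle/\|p-\bar p\|\le0\}$. For $F:\mathbb R^n\rightrightarrows\mathbb R^n$, regular coderivative $\widehat D^*F(u,v)(w)=\{z:(z,-w)\in\widehat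 N((u,v);\operatorname{gph}F)\}$, and limiting coderivative $z\in D^*F(\bar u,\bar v)(w)$ iff there are $(u_k,v_k)\in\operatorname{gph}F$, $(u_k,v_k)\to(\bar u,\bar v)$, $w_k\to w$, $z_k\to z$ with $z_k\in\widehat D^*F(u_k,v_k)(w_k)$. Second-order subdifferentials for $v\in\partial f(u)$: $\partial^2f(u,v)(w)=D^*(\partial f)(u,v)(w)$ (limiting) and $\breve\partial^2f(u,v)(w)=\widehat D^*(\partial f)(u,v)(w)$ (combined). *)

theory Defs
  imports "HOL-Analysis.Analysis"
begin

type_synonym 'n vec = "real ^ 'n"

definition lower_C2 :: "'t::topological_space itself \<Rightarrow> ('n::finite vec \<Rightarrow> real) \<Rightarrow> bool" where
  "lower_C2 _ f \<longleftrightarrow>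
    (\<forall>xb. \<exists>V (T::'t set) ft g H.
        open V \<and> xb \<in> V \<and> compact T \<and> T \<noteq> {} \<and>
        (\<forall>t\<in>T. \<forall>x\<in>V. (ft t has_derivative (\<lambda>h. g t x \<bullet> h)) (at x)
                       \<and> (g t has_derivative H t x) (at x)) \<and>
        continuous_on (T \<times> V) (\<lambda>(t,x). ft t x) \<and>
        continuous_on (T \<times> V) (\<lambda>(t,x). g t x) \<and>
        (\<forall>h. continuous_on (T \<times> V) (\<lambda>(t,x). H t x h)) \<and>
        (\<forall>x\<in>V. (\<forall>t\<in>T. ft t x \<le> f x) \<and> (\<exists>t\<in>T. ft t x = f x)))"

text \<open>Regular subdifferential: liminf_{u -> ub} (f u - f ub - <v,u-ub>)/|u-ub| \<ge> 0.\<close>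
definition reg_subdiff :: "('n::finite vec \<Rightarrow> real) \<Rightarrow> 'n vec \<Rightarrow> 'n vec set" where
  "reg_subdiff f ub = {v. \<forall>e>0. \<forall>\<^sub>F u in at ub.
      f u - f ub - v \<bullet> (u - ub) \<ge> - e * norm (u - ub)}"

definition lim_subdiff :: "('n::finite vec \<Rightarrow> real) \<Rightarrow> 'n vec \<Rightarrow> 'n vec set" where
  "lim_subdiff f ub = {v. \<exists>u vs. u \<longlonglongrightarrow> ub \<and> (\<lambda>k. f (u k)) \<longlonglongrightarrow> f ub \<and>
      vs \<longlonglongrightarrow> v \<and> (\<forall>k. vs k \<in> reg_subdiff f (u k))}"

text \<open>Regular normal cone: limsup_{p -> pb, p in Omega} <q,p-pb>/|p-pb| \<le> 0.\<close>
definition reg_normal :: "('n::finite vec \<times> 'n vec) \<Rightarrow> ('n vec \<times> 'n vec) set \<Rightarrow> ('n vec \<times> 'n vec) set" where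
  "reg_normal pb \<Omega> = {q. \<forall>e>0. \<forall>\<^sub>F p in at pb within \<Omega>.
      q \<bullet> (p - pb) \<le> e * norm (p - pb)}"

definition gph :: "('n::finite vec \<Rightarrow> 'n vec set) \<Rightarrow> ('n vec \<times> 'n vec) set" where
  "gph F = {(u, v). v \<in> F u}"

definition reg_coderiv :: "('n::finite vec \<Rightarrow> 'n vec set) \<Rightarrow> 'n vec \<Rightarrow> 'n vec \<Rightarrow> 'n vec \<Rightarrow> 'n vec set" where
  "reg_coderiv F u v w = {z. (z, - w) \<in> reg_normal (u, v) (gph F)}"

definition lim_coderiv :: "('n::finite vec \<Rightarrow> 'n vec set) \<Rightarrow> 'n vec \<Rightarrow> 'n vec \<Rightarrow> 'n vec \<Rightarrow> 'n vec set" where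
  "lim_coderiv F ub vb w = {z. \<exists>u v ws zs. (\<forall>k. (u k, v k) \<in> gph F) \<and>
      u \<longlonglongrightarrow> ub \<and> v \<longlonglongrightarrow> vb \<and> ws \<longlonglongrightarrow> w \<and> zs \<longlonglongrightarrow> z \<and>
      (\<forall>k. zs k \<in> reg_coderiv F (u k) (v k) (ws k))}"

definition second_subdiff :: "('n::finite vec \<Rightarrow> real) \<Rightarrow> 'n vec \<Rightarrow> 'n vec \<Rightarrow> 'n vec \<Rightarrow> 'n vec set" where
  "second_subdiff f u v w = lim_coderiv (lim_subdiff f) u v w"

definition combined_second_subdiff :: "('n::finite vec \<Rightarrow> real) \<Rightarrow> 'n vec \<Rightarrow> 'n vec \<Rightarrow> 'n vec \<Rightarrow> 'n vec set" where
  "combined_second_subdiff f u v w = reg_coderiv (lim_subdiff f) u v w"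

end

theory Submission
  imports Defs
begin

(*
  (i) \<Longrightarrow> (ii).  For convex f the subdifferential is monotone and its resolvent is everywhere
  defined (minimise f + |. - x|^2/2).  Any regular coderivative of such an operator is positive
  semidefinite: the resolvent yields graph points (u + a, v + b) with a + b = t (z - w) and
  <a, b> \<ge> 0 for every t > 0, and if <z, w> < 0 these violate the regular normal cone inequality
  at (u, v).  Positive semidefiniteness passes to limits, hence to the limiting coderivative.

  (ii) \<Longrightarrow> (iii) since the combined second subdifferential is contained in the limiting one.

  (iii) \<Longrightarrow> (i).  Locally a lower-C2 function is Lipschitz with bounded subgradients, and
  f + M |.|^2 is convex; hence limiting subgradients give quadratic minorants and the graph of
  the subdifferential is closed and compact over compact sets.  If f is not convex, a subgradient
  v0 at u0 violates the subgradient inequality at some m.  Maximising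
  f u + <v, m - u> - A |u - m|^(2N) over the part of the graph above a ball around m, the steep
  penalty forces an interior maximiser (u, v) with u \<noteq> m.  First-order optimality there puts
  z = -c (u - m), c > 0, into the combined second subdifferential at (u, v) in direction u - m,
  while <z, u - m> < 0.
*)


section \<open>Regular and limiting subgradients\<close>

lemma power2_norm_add:
  fixes a b :: "'a::real_inner"
  shows "(norm (a + b))\<^sup>2 = (norm a)\<^sup>2 + 2 * (a \<bullet> b) + (norm b)\<^sup>2"
  unfolding power2_norm_eq_inner by (simp add: inner_add_left inner_add_right inner_commute)

lemma eventually_at_right_0_ray:
  fixes u d :: "'a::real_normed_vector"
  assumes "d \<noteq> 0" and "\<forall>\<^sub>F y in at u. P y"
  shows "\<forall>\<^sub>F s in at_right 0. P (u + s *\<^sub>R d)"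
proof -
  have "filterlim (\<lambda>s. u + s *\<^sub>R d) (at u) (at_right (0::real))"
  proof (rule filterlim_atI)
    show "((\<lambda>s. u + s *\<^sub>R d) \<longlongrightarrow> u) (at_right 0)"
      by (auto intro!: tendsto_eq_intros)
    show "\<forall>\<^sub>F s in at_right 0. u + s *\<^sub>R d \<noteq> u"
      using eventually_at_right_less[of 0] by eventually_elim (use assms(1) in auto)
  qed
  with assms(2) show ?thesis by (rule eventually_compose_filterlim)
qed

lemma reg_subdiff_subset_lim_subdiff: "reg_subdiff f u \<subseteq> lim_subdiff f u"
proof
  fix v assume "v \<in> reg_subdiff f u"
  then show "v \<in> lim_subdiff f u"
    unfolding lim_subdiff_def by (intro CollectI exI[of _ "\<lambda>k. u"] exI[of _ "\<lambda>k. v"]) simp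
qed

lemma combined_second_subdiff_subset_second_subdiff:
  assumes "v \<in> lim_subdiff f u"
  shows "combined_second_subdiff f u v w \<subseteq> second_subdiff f u v w"
proof
  fix z assume "z \<in> combined_second_subdiff f u v w"
  with assms show "z \<in> second_subdiff f u v w"
    unfolding second_subdiff_def combined_second_subdiff_def lim_coderiv_def
    by (intro CollectI exI[of _ "\<lambda>k. u"] exI[of _ "\<lambda>k. v"] exI[of _ "\<lambda>k. w"] exI[of _ "\<lambda>k. z"])
       (auto simp: gph_def)
qed

lemma lim_coderiv_inner_nonneg:
  assumes reg: "\<And>u v w z. v \<in> F u \<Longrightarrow> z \<in> reg_coderiv F u v w \<Longrightarrow> 0 \<le> z \<bullet> w"
    and z: "z \<in> lim_coderiv F u v w"
  shows "0 \<le> z \<bullet> w"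
proof -
  from z obtain us vs ws zs where gph: "\<And>k. (us k, vs k) \<in> gph F"
    and ws: "ws \<longlonglongrightarrow> w" and zs: "zs \<longlonglongrightarrow> z"
    and zk: "\<And>k. zs k \<in> reg_coderiv F (us k) (vs k) (ws k)"
    unfolding lim_coderiv_def by blast
  have "(\<lambda>k. zs k \<bullet> ws k) \<longlonglongrightarrow> z \<bullet> w"
    by (intro tendsto_intros zs ws)
  moreover have "0 \<le> zs k \<bullet> ws k" for k
    using reg[OF _ zk] gph by (simp add: gph_def)
  ultimately show ?thesis
    by (intro tendsto_lowerbound[OF _ always_eventually]) auto
qed

lemma gph_lim_subdiff_eq_closure:
  assumes cont: "continuous_on UNIV f"
  shows "gph (lim_subdiff f) = closure (gph (reg_subdiff f))"
proof (intro set_eqI iffI)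
  fix p assume "p \<in> gph (lim_subdiff f)"
  then obtain us vs where us: "us \<longlonglongrightarrow> fst p" and vs: "vs \<longlonglongrightarrow> snd p"
    and reg: "\<And>k. vs k \<in> reg_subdiff f (us k)"
    unfolding gph_def lim_subdiff_def by (auto simp: case_prod_beta)
  have "(\<lambda>k. (us k, vs k)) \<longlonglongrightarrow> (fst p, snd p)"
    by (rule tendsto_Pair[OF us vs])
  then show "p \<in> closure (gph (reg_subdiff f))"
    unfolding closure_sequential using reg
    by (intro exI[of _ "\<lambda>k. (us k, vs k)"]) (simp add: gph_def)
next
  fix p assume "p \<in> closure (gph (reg_subdiff f))"
  then obtain s where s: "\<And>k. s k \<in> gph (reg_subdiff f)" and "s \<longlonglongrightarrow> p"
    unfolding closure_sequential by blast
  then have us: "(\<lambda>k. fst (s k)) \<longlonglongrightarrow> fst p" and vs: "(\<lambda>k. snd (s k)) \<longlonglongrightarrow> snd p"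
    by (auto intro: tendsto_fst tendsto_snd)
  moreover have "(\<lambda>k. f (fst (s k))) \<longlonglongrightarrow> f (fst p)"
    using continuous_on_tendsto_compose[OF cont us] by simp
  moreover have "\<And>k. snd (s k) \<in> reg_subdiff f (fst (s k))"
    using s by (simp add: gph_def case_prod_beta)
  ultimately have "snd p \<in> lim_subdiff f (fst p)"
    unfolding lim_subdiff_def by blast
  then show "p \<in> gph (lim_subdiff f)"
    by (simp add: gph_def case_prod_beta)
qed

lemma convex_on_if_affine_minorants:
  fixes h :: "'a::real_inner \<Rightarrow> real"
  assumes S: "convex S" and minor: "\<And>w. w \<in> S \<Longrightarrow> \<exists>D. \<forall>x\<in>S. h w + D \<bullet> (x - w) \<le> h x"
  shows "convex_on S h"
proof (rule convex_onI[OF _ S])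
  fix s :: real and x y assume s: "0 < s" "s < 1" and x: "x \<in> S" and y: "y \<in> S"
  define w where "w = (1 - s) *\<^sub>R x + s *\<^sub>R y"
  have "w \<in> S" using convexD_alt[OF S x y, of s] s by (simp add: w_def)
  then obtain D where D: "\<And>x. x \<in> S \<Longrightarrow> h w + D \<bullet> (x - w) \<le> h x" using minor by blast
  have balance: "(1 - s) * (D \<bullet> (x - w)) + s * (D \<bullet> (y - w)) = 0"
  proof -
    have "(1 - s) *\<^sub>R (x - w) + s *\<^sub>R (y - w) = 0" by (simp add: w_def algebra_simps)
    then show ?thesis by (metis inner_add_right inner_scaleR_right inner_zero_right)
  qed
  have "h w = (1 - s) * (h w + D \<bullet> (x - w)) + s * (h w + D \<bullet> (y - w))"
    using balance by (simp add: algebra_simps)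
  also have "\<dots> \<le> (1 - s) * h x + s * h y"
    using D[OF x] D[OF y] s by (intro add_mono mult_left_mono) auto
  finally show "h ((1 - s) *\<^sub>R x + s *\<^sub>R y) \<le> (1 - s) * h x + s * h y" by (simp add: w_def)
qed

lemma reg_subdiff_add_affine_minorized:
  assumes v: "v \<in> reg_subdiff f u" and q: "\<And>y. q u + D \<bullet> (y - u) \<le> q y"
  shows "v + D \<in> reg_subdiff (\<lambda>y. f y + q y) u"
  unfolding reg_subdiff_def
proof (intro CollectI allI impI)
  fix e :: real assume "e > 0"
  with v have "\<forall>\<^sub>F y in at u. - e * norm (y - u) \<le> f y - f u - v \<bullet> (y - u)"
    by (simp add: reg_subdiff_def)
  then show "\<forall>\<^sub>F y in at u. - e * norm (y - u) \<le> f y + q y - (f u + q u) - (v + D) \<bullet> (y - u)"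
  proof (rule eventually_mono)
    fix y assume "- e * norm (y - u) \<le> f y - f u - v \<bullet> (y - u)"
    then show "- e * norm (y - u) \<le> f y + q y - (f u + q u) - (v + D) \<bullet> (y - u)"
      using q[of y] by (simp add: inner_add_left)
  qed
qed

lemma reg_subdiff_of_differentiable_minorant:
  assumes d: "(\<phi> has_derivative (\<lambda>h. g \<bullet> h)) (at u)" and eq: "\<phi> u = f u"
    and le: "\<forall>\<^sub>F y in at u. \<phi> y \<le> f y"
  shows "g \<in> reg_subdiff f u"
  unfolding reg_subdiff_def
proof (intro CollectI allI impI)
  fix e :: real assume "e > 0"
  with d have "\<forall>\<^sub>F y in at u. norm (\<phi> y - \<phi> u - g \<bullet> (y - u)) \<le> e * norm (y - u)"
    by (simp add: has_derivative_within_alt2)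
  with le show "\<forall>\<^sub>F y in at u. - e * norm (y - u) \<le> f y - f u - g \<bullet> (y - u)"
    by eventually_elim (use eq in auto)
qed

lemma reg_subdiff_of_prox_local_min:
  fixes f :: "'n::finite vec \<Rightarrow> real"
  assumes min: "\<forall>\<^sub>F y in at p. f p + (norm (p - x))\<^sup>2 / 2 \<le> f y + (norm (y - x))\<^sup>2 / 2"
  shows "x - p \<in> reg_subdiff f p"
  unfolding reg_subdiff_def
proof (intro CollectI allI impI)
  fix e :: real assume "e > 0"
  then have "\<forall>\<^sub>F y in at p. norm (y - p) < 2 * e"
    using tendstoD[OF tendsto_ident_at[of p UNIV], of "2 * e"] by (simp add: dist_norm)
  with min show "\<forall>\<^sub>F y in at p. - e * norm (y - p) \<le> f y - f p - (x - p) \<bullet> (y - p)"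
  proof eventually_elim
    case (elim y)
    have "(norm (y - x))\<^sup>2 = (norm (y - p))\<^sup>2 - 2 * ((x - p) \<bullet> (y - p)) + (norm (p - x))\<^sup>2"
      unfolding power2_norm_eq_inner by (simp add: inner_diff_left inner_diff_right inner_commute)
    moreover have "(norm (y - p))\<^sup>2 \<le> 2 * e * norm (y - p)"
      using elim(2) by (simp add: power2_eq_square mult_right_mono)
    ultimately show ?case
      using elim(1) by linarith
  qed
qed

lemma reg_subdiff_norm_le:
  fixes f :: "'n::finite vec \<Rightarrow> real"
  assumes v: "v \<in> reg_subdiff f u" and calm: "\<forall>\<^sub>F y in at u. f y \<le> f u + G * norm (y - u)"
  shows "norm v \<le> G"
proof (rule field_le_epsilon)
  fix e :: real assume "e > 0"
  with v have "\<forall>\<^sub>F y in at u. - e * norm (y - u) \<le> f y - f u - v \<bullet> (y - u)"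
    by (simp add: reg_subdiff_def)
  with calm have ineq: "\<forall>\<^sub>F y in at u. v \<bullet> (y - u) \<le> (G + e) * norm (y - u)"
    by eventually_elim (simp add: algebra_simps)
  define d :: "'n vec" where "d = (if v = 0 then 1 else v)"
  have "d \<noteq> 0" by (simp add: d_def vec_eq_iff)
  from eventually_at_right_0_ray[OF this ineq] eventually_at_right_less[of 0]
  have "\<forall>\<^sub>F s in at_right 0. 0 < s \<and> s * (v \<bullet> d) \<le> s * ((G + e) * norm d)"
    by eventually_elim (simp add: mult.assoc mult.left_commute)
  then obtain s where "0 < s" "s * (v \<bullet> d) \<le> s * ((G + e) * norm d)"
    using eventually_happens'[OF trivial_limit_at_right_real] by blast
  then have "v \<bullet> d \<le> (G + e) * norm d" by simp
  then show "norm v \<le> G + e"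
  proof (cases "v = 0")
    case True
    then show ?thesis using \<open>v \<bullet> d \<le> (G + e) * norm d\<close> \<open>d \<noteq> 0\<close>
      by (simp add: zero_le_mult_iff)
  next
    case False
    then have "norm v * norm v \<le> norm v * (G + e)"
      using \<open>v \<bullet> d \<le> (G + e) * norm d\<close>
      by (simp add: d_def power2_norm_eq_inner[symmetric] power2_eq_square mult.commute)
    then show ?thesis using False by simp
  qed
qed

lemma convex_on_reg_subdiff_ineq:
  fixes h :: "'n::finite vec \<Rightarrow> real"
  assumes cv: "convex_on S h" and u: "u \<in> S" and x: "x \<in> S" and v: "v \<in> reg_subdiff h u"
  shows "h u + v \<bullet> (x - u) \<le> h x"
proof (cases "x = u")
  case False
  show ?thesis
  proof (rule field_le_epsilon)
    fix e :: real assume "e > 0"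
    with False have "e / norm (x - u) > 0" by simp
    with v have ev: "\<forall>\<^sub>F y in at u. - (e / norm (x - u)) * norm (y - u) \<le> h y - h u - v \<bullet> (y - u)"
      unfolding reg_subdiff_def by blast
    have "x - u \<noteq> 0" using False by simp
    from eventually_at_right_0_ray[OF this ev] eventually_at_right_real[OF zero_less_one]
    have "\<forall>\<^sub>F s in at_right 0. 0 < s \<and> s < 1 \<and>
        - (e * s) \<le> h (u + s *\<^sub>R (x - u)) - h u - s * (v \<bullet> (x - u))"
      by eventually_elim (use False in simp)
    then obtain s where s: "0 < s" "s < 1"
      and reg: "- (e * s) \<le> h (u + s *\<^sub>R (x - u)) - h u - s * (v \<bullet> (x - u))"
      using eventually_happens'[OF trivial_limit_at_right_real] by blast
    have "h (u + s *\<^sub>R (x - u)) \<le> (1 - s) * h u + s * h x"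
      using convex_onD[OF cv _ _ u x, of s] s by (simp add: algebra_simps)
    then have "s * (h u + v \<bullet> (x - u)) \<le> s * (h x + e)"
      using reg by (simp add: algebra_simps)
    then show "h u + v \<bullet> (x - u) \<le> h x + e" using s by simp
  qed
qed simp

lemma eventually_le_at_within_if_max_near:
  fixes \<Phi> :: "'a::topological_space \<times> 'b::topological_space \<Rightarrow> real"
  assumes max: "\<And>p. p \<in> G \<Longrightarrow> fst p \<in> K \<Longrightarrow> \<Phi> p \<le> \<Phi> q" and q: "fst q \<in> interior K"
  shows "\<forall>\<^sub>F p in at q within G. \<Phi> p \<le> \<Phi> q"
proof -
  have "\<forall>\<^sub>F p in nhds q. p \<in> interior K \<times> UNIV"
    using q by (intro eventually_nhds_in_open open_Times) (auto simp: mem_Times_iff)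
  then show ?thesis
    unfolding eventually_at_filter
    by (rule eventually_mono) (use max in \<open>auto dest: subsetD[OF interior_subset]\<close>)
qed

lemma exists_power_four_dominates:
  fixes C \<delta> :: real
  assumes "0 < \<delta>"
  obtains N :: nat where "0 < N" "C < \<delta> / 2 * 4 ^ N"
proof -
  obtain n :: nat where "2 * C / \<delta> < 4 ^ n" using real_arch_pow[of 4] by auto
  then have "C < \<delta> / 2 * 4 ^ n" using assms by (simp add: field_simps)
  also have "\<dots> \<le> \<delta> / 2 * 4 ^ Suc n" using assms by (intro mult_left_mono) simp_all
  finally show ?thesis using that[of "Suc n"] by simp
qed

lemma has_derivative_remainder_le:
  fixes \<beta> :: "'a::real_inner \<Rightarrow> real"
  assumes "(\<beta> has_derivative (\<lambda>h. - (z \<bullet> h))) (at u)" and "0 < e"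
  shows "\<forall>\<^sub>F x in nhds u. \<beta> x - \<beta> u + z \<bullet> (x - u) \<le> e * norm (x - u)"
proof -
  have "\<forall>\<^sub>F x in at u. norm (\<beta> x - \<beta> u - - (z \<bullet> (x - u))) \<le> e * norm (x - u)"
    using assms unfolding has_derivative_within_alt2 by blast
  then have "\<forall>\<^sub>F x in at u. \<beta> x - \<beta> u + z \<bullet> (x - u) \<le> e * norm (x - u)"
    by (rule eventually_mono) (smt (verit) real_norm_def)
  then show ?thesis by (simp add: eventually_nhds_conv_at)
qed

lemma inner_plus_square_le_norm_Pair:
  fixes a b :: "'a::real_inner"
  shows "M * (norm a)\<^sup>2 + b \<bullet> a \<le> (\<bar>M\<bar> + 1) * norm (a, b) * norm (a, b)"
proof -
  have n: "norm (a, b) * norm (a, b) = (norm a)\<^sup>2 + (norm b)\<^sup>2"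
    by (simp add: norm_Pair power2_eq_square[symmetric])
  have "M * (norm a)\<^sup>2 \<le> \<bar>M\<bar> * (norm (a, b) * norm (a, b))"
    unfolding n by (intro mult_mono) auto
  moreover have "b \<bullet> a \<le> norm (a, b) * norm (a, b)"
  proof -
    have "b \<bullet> a \<le> norm a * norm b"
      using norm_cauchy_schwarz[of b a] by (simp add: mult.commute)
    moreover have "0 \<le> norm a * norm b" by simp
    ultimately show ?thesis
      using sum_squares_bound[of "norm a" "norm b"] unfolding n by linarith
  qed
  ultimately show ?thesis by (simp add: algebra_simps)
qed

lemma combined_second_subdiff_at_local_max:
  fixes f \<beta> :: "'n::finite vec \<Rightarrow> real"
  assumes max: "\<forall>\<^sub>F p in at (ub, vb) within gph (lim_subdiff f).
      f (fst p) + snd p \<bullet> (m - fst p) - \<beta> (fst p) \<le> f ub + vb \<bullet> (m - ub) - \<beta> ub"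
    and d\<beta>: "(\<beta> has_derivative (\<lambda>h. - (z \<bullet> h))) (at ub)"
    and minor: "\<forall>\<^sub>F x in nhds ub. f ub + vb \<bullet> (x - ub) - M * (norm (x - ub))\<^sup>2 \<le> f x"
  shows "z \<in> combined_second_subdiff f ub vb (ub - m)"
  unfolding combined_second_subdiff_def reg_coderiv_def reg_normal_def
proof (intro CollectI allI impI)
  fix e :: real assume e: "0 < e"
  define pb where "pb = (ub, vb)"
  let ?F = "at pb within gph (lim_subdiff f)"
  have fst_lim: "filterlim fst (nhds ub) ?F"
    using tendsto_fst[OF tendsto_ident_at[of pb]] by (simp add: pb_def)
  have "\<forall>\<^sub>F p in ?F. dist p pb < e / (2 * (\<bar>M\<bar> + 1))"
    using e by (intro tendstoD[OF tendsto_ident_at]) simp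
  then have small: "\<forall>\<^sub>F p in ?F. (\<bar>M\<bar> + 1) * norm (p - pb) \<le> e / 2"
    by (rule eventually_mono) (simp add: dist_norm field_simps)
  from eventually_compose_filterlim[OF has_derivative_remainder_le[OF d\<beta> half_gt_zero[OF e]] fst_lim]
    eventually_compose_filterlim[OF minor fst_lim]
    max small
  show "\<forall>\<^sub>F p in ?F. (z, - (ub - m)) \<bullet> (p - pb) \<le> e * norm (p - pb)"
    unfolding pb_def[symmetric]
  proof eventually_elim
    case (elim p)
    obtain u v where p: "p = (u, v)" by (cases p)
    define n where "n = norm (p - pb)"
    have nu: "norm (u - ub) \<le> n"
      using norm_fst_le[of "u - ub" "v - vb"] by (simp add: n_def p pb_def)
    have "M * (norm (u - ub))\<^sup>2 + (v - vb) \<bullet> (u - ub) \<le> (\<bar>M\<bar> + 1) * n * n"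
      using inner_plus_square_le_norm_Pair[of M "u - ub" "v - vb"] by (simp add: n_def p pb_def)
    also have "\<dots> \<le> e / 2 * n"
      using elim(4) by (intro mult_right_mono) (simp_all add: n_def)
    finally have quad: "M * (norm (u - ub))\<^sup>2 + (v - vb) \<bullet> (u - ub) \<le> e / 2 * n" .
    have "(z, - (ub - m)) \<bullet> (p - pb) = z \<bullet> (u - ub) + (v - vb) \<bullet> (m - ub)"
      by (simp add: p pb_def inner_diff_left inner_diff_right inner_commute)
    also have "\<dots> \<le> M * (norm (u - ub))\<^sup>2 + (v - vb) \<bullet> (u - ub) + (\<beta> u - \<beta> ub + z \<bullet> (u - ub))"
      using elim(2,3) by (simp add: p inner_diff_left inner_diff_right)
    also have "\<dots> \<le> e * n"
      using quad elim(1) nu e by (simp add: p) (smt (verit) mult_left_mono)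
    finally show ?case by (simp add: n_def)
  qed
qed

section \<open>Convex functions\<close>

lemma convex_on_lim_subdiff_ineq:
  fixes f :: "'n::finite vec \<Rightarrow> real"
  assumes cv: "convex_on UNIV f" and v: "v \<in> lim_subdiff f u"
  shows "f u + v \<bullet> (x - u) \<le> f x"
proof -
  from v obtain us vs where us: "us \<longlonglongrightarrow> u" and fu: "(\<lambda>k. f (us k)) \<longlonglongrightarrow> f u"
    and vs: "vs \<longlonglongrightarrow> v" and reg: "\<And>k. vs k \<in> reg_subdiff f (us k)"
    unfolding lim_subdiff_def by blast
  have "(\<lambda>k. f (us k) + vs k \<bullet> (x - us k)) \<longlonglongrightarrow> f u + v \<bullet> (x - u)"
    by (intro tendsto_intros fu vs us)
  moreover have "f (us k) + vs k \<bullet> (x - us k) \<le> f x" for k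
    using convex_on_reg_subdiff_ineq[OF cv _ _ reg] by simp
  ultimately show ?thesis
    by (intro tendsto_upperbound[OF _ always_eventually]) auto
qed

lemma convex_on_lim_subdiff_monotone:
  fixes f :: "'n::finite vec \<Rightarrow> real"
  assumes cv: "convex_on UNIV f" and "v1 \<in> lim_subdiff f u1" "v2 \<in> lim_subdiff f u2"
  shows "0 \<le> (u1 - u2) \<bullet> (v1 - v2)"
  using convex_on_lim_subdiff_ineq[OF cv assms(2), of u2]
    convex_on_lim_subdiff_ineq[OF cv assms(3), of u1]
  by (simp add: inner_diff_left inner_diff_right inner_commute)

lemma convex_on_prox_point_exists:
  fixes f :: "'n::finite vec \<Rightarrow> real"
  assumes cv: "convex_on UNIV f" and v0: "v0 \<in> lim_subdiff f u0"
  shows "\<exists>p. x - p \<in> reg_subdiff f p"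
proof -
  define F where "F y = f y + (norm (y - x))\<^sup>2 / 2" for y
  define c0 where "c0 = f u0 + v0 \<bullet> (x - u0)"
  define R where "R = 2 * norm v0 + \<bar>f x - c0\<bar> + 2"
  have coercive: "f x < F y" if y: "R \<le> norm (y - x)" for y
  proof -
    have "c0 + v0 \<bullet> (y - x) \<le> f y"
      using convex_on_lim_subdiff_ineq[OF cv v0, of y] by (simp add: c0_def inner_diff_right)
    moreover have "- norm v0 * norm (y - x) \<le> v0 \<bullet> (y - x)"
      using Cauchy_Schwarz_ineq2[of v0 "y - x"] by (simp add: abs_le_iff)
    moreover have "norm (y - x) * 1 \<le> norm (y - x) * (norm (y - x) / 2 - norm v0)"
      using y by (intro mult_left_mono) (auto simp: R_def)
    moreover have "f x - c0 < norm (y - x)"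
      using y abs_ge_self[of "f x - c0"] norm_ge_zero[of v0] unfolding R_def by linarith
    ultimately show ?thesis
      by (simp add: F_def power2_eq_square algebra_simps)
  qed
  have "continuous_on (cball x R) F"
    unfolding F_def using convex_on_continuous[OF open_UNIV cv]
    by (intro continuous_intros) (auto intro: continuous_on_subset)
  moreover have "0 \<le> R" by (simp add: R_def)
  ultimately obtain p where pmin: "\<And>y. y \<in> cball x R \<Longrightarrow> F p \<le> F y"
    using continuous_attains_inf[OF compact_cball] by (metis cball_eq_empty not_le)
  have "F p \<le> f x" using pmin[of x] \<open>0 \<le> R\<close> by (simp add: F_def)
  then have "\<not> R \<le> norm (p - x)" using coercive by force
  then have "p \<in> ball x R" by (simp add: dist_norm norm_minus_commute)
  from eventually_at_in_open'[OF open_ball this] have "\<forall>\<^sub>F y in at p. F p \<le> F y"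
    by (rule eventually_mono) (simp add: pmin)
  then show ?thesis
    by (intro exI[of _ p] reg_subdiff_of_prox_local_min) (simp add: F_def)
qed

lemma norm_add_less_norm_diff_iff:
  fixes z w :: "'a::real_inner"
  shows "norm (z + w) < norm (z - w) \<longleftrightarrow> z \<bullet> w < 0"
proof -
  have "(norm (z + w))\<^sup>2 = (norm (z - w))\<^sup>2 + 4 * (z \<bullet> w)"
    unfolding power2_norm_eq_inner
    by (simp add: inner_add_left inner_add_right inner_diff_left inner_diff_right inner_commute)
  moreover have "norm (z + w) < norm (z - w) \<longleftrightarrow> (norm (z + w))\<^sup>2 < (norm (z - w))\<^sup>2"
    using power2_less_imp_less power_strict_mono[of _ _ 2] by fastforce
  ultimately show ?thesis by simp
qed

lemma inner_bounds_of_monotone_split: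
  fixes a b z w :: "'a::real_inner"
  assumes sum: "a + b = t *\<^sub>R (z - w)" and mono: "0 \<le> a \<bullet> b" and t: "0 \<le> t"
  shows "norm (a, b) \<le> t * norm (z - w)"
    and "t / 2 * norm (z - w) * (norm (z - w) - norm (z + w)) \<le> z \<bullet> a - w \<bullet> b"
proof -
  define d where "d = z - w"
  have "(norm (a, b))\<^sup>2 = (norm a)\<^sup>2 + (norm b)\<^sup>2"
    by (simp add: norm_Pair)
  also have "\<dots> \<le> (norm (a + b))\<^sup>2"
    using mono unfolding power2_norm_eq_inner
    by (simp add: inner_add_left inner_add_right inner_commute)
  finally have "(norm (a, b))\<^sup>2 \<le> (norm (a + b))\<^sup>2" .
  then have "norm (a, b) \<le> norm (a + b)"
    by (rule power2_le_imp_le) simp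
  then show "norm (a, b) \<le> t * norm (z - w)"
    using t by (simp add: sum)
  define q where "q = a - (t / 2) *\<^sub>R d"
  have b: "b = t *\<^sub>R d - a" using sum by (simp add: d_def algebra_simps)
  have "(norm q)\<^sup>2 = (t / 2)\<^sup>2 * (norm d)\<^sup>2 - a \<bullet> b"
    unfolding q_def b power2_norm_eq_inner
    by (simp add: inner_diff_left inner_diff_right inner_commute power2_eq_square algebra_simps)
  also have "\<dots> \<le> (t * norm d / 2)\<^sup>2"
    using mono by (simp add: power_mult_distrib power_divide)
  finally have "norm q \<le> t * norm d / 2"
    by (rule power2_le_imp_le) (use t in simp)
  then have "norm (z + w) * norm q \<le> norm (z + w) * (t * norm d / 2)"
    by (rule mult_left_mono) simp
  then have "- (norm (z + w) * (t * norm d / 2)) \<le> (z + w) \<bullet> q"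
    using Cauchy_Schwarz_ineq2[of "z + w" q] by linarith
  moreover have "z \<bullet> a - w \<bullet> b = (z + w) \<bullet> q + t / 2 * (norm d)\<^sup>2"
  proof -
    have "z \<bullet> a - w \<bullet> b = (z + w) \<bullet> q + t / 2 * ((z - w) \<bullet> d)"
      unfolding q_def b by (simp add: inner_add_left inner_diff_left inner_diff_right algebra_simps)
    then show ?thesis by (simp add: d_def power2_norm_eq_inner)
  qed
  ultimately show "t / 2 * norm (z - w) * (norm (z - w) - norm (z + w)) \<le> z \<bullet> a - w \<bullet> b"
    by (simp add: d_def power2_eq_square algebra_simps)
qed

lemma reg_coderiv_inner_nonneg_if_monotone:
  fixes F :: "'n::finite vec \<Rightarrow> 'n vec set"
  assumes mono: "\<And>u1 v1 u2 v2. v1 \<in> F u1 \<Longrightarrow> v2 \<in> F u2 \<Longrightarrow> 0 \<le> (u1 - u2) \<bullet> (v1 - v2)"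
    and resolvent: "\<And>x. \<exists>p. x - p \<in> F p"
    and v: "v \<in> F u" and z: "z \<in> reg_coderiv F u v w"
  shows "0 \<le> z \<bullet> w"
proof (rule ccontr)
  assume "\<not> 0 \<le> z \<bullet> w"
  then have "norm (z + w) < norm (z - w)"
    by (simp add: norm_add_less_norm_diff_iff)
  define e where "e = (norm (z - w) - norm (z + w)) / 4"
  have e: "0 < e" using \<open>norm (z + w) < norm (z - w)\<close> by (simp add: e_def)
  with z have "\<forall>\<^sub>F p in at (u, v) within gph F. (z, - w) \<bullet> (p - (u, v)) \<le> e * norm (p - (u, v))"
    by (simp add: reg_coderiv_def reg_normal_def)
  then obtain \<delta> where \<delta>: "0 < \<delta>" and near: "\<And>p. p \<in> gph F \<Longrightarrow> p \<noteq> (u, v) \<Longrightarrow> dist p (u, v) < \<delta> \<Longrightarrow>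
      (z, - w) \<bullet> (p - (u, v)) \<le> e * norm (p - (u, v))"
    unfolding eventually_at by blast
  have zw: "0 < norm (z - w)"
    using \<open>norm (z + w) < norm (z - w)\<close> norm_ge_zero[of "z + w"] by linarith
  define t where "t = \<delta> / (2 * norm (z - w))"
  have t: "0 < t" using \<delta> zw by (simp add: t_def)
  obtain p where p: "u + v + t *\<^sub>R (z - w) - p \<in> F p" using resolvent by blast
  define q where "q = u + v + t *\<^sub>R (z - w) - p"
  define a where "a = p - u"
  define b where "b = q - v"
  have sum: "a + b = t *\<^sub>R (z - w)" by (simp add: a_def b_def q_def)
  have ab: "0 \<le> a \<bullet> b" using mono[OF p[folded q_def] v] by (simp add: a_def b_def)
  note bounds = inner_bounds_of_monotone_split[OF sum ab less_imp_le[OF t]]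
  have "(u + a, v + b) \<in> gph F" using p[folded q_def] by (simp add: a_def b_def gph_def)
  moreover have "(u + a, v + b) \<noteq> (u, v)" using sum t zw by auto
  moreover have "dist (u + a, v + b) (u, v) < \<delta>"
    using bounds(1) \<delta> zw by (simp add: dist_norm t_def)
  ultimately have "z \<bullet> a - w \<bullet> b \<le> e * norm (a, b)"
    using near by fastforce
  also have "\<dots> \<le> e * (t * norm (z - w))"
    using bounds(1) e by (simp add: mult_left_mono)
  finally have "z \<bullet> a - w \<bullet> b \<le> e * (t * norm (z - w))" .
  moreover have
    "t / 2 * norm (z - w) * (norm (z - w) - norm (z + w)) = 2 * (e * (t * norm (z - w)))"
    by (simp add: e_def)
  ultimately show False
    using bounds(2) e t zw by (smt (verit) mult_pos_pos)
qed

lemma convex_on_second_subdiff_inner_nonneg: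
  fixes f :: "'n::finite vec \<Rightarrow> real"
  assumes cv: "convex_on UNIV f" and z: "z \<in> second_subdiff f u v w"
  shows "0 \<le> z \<bullet> w"
proof -
  have "0 \<le> z' \<bullet> w'"
    if v': "v' \<in> lim_subdiff f u'" and z': "z' \<in> reg_coderiv (lim_subdiff f) u' v' w'"
    for u' v' w' z'
  proof (rule reg_coderiv_inner_nonneg_if_monotone[OF _ _ v' z'])
    show "0 \<le> (u1 - u2) \<bullet> (v1 - v2)"
      if "v1 \<in> lim_subdiff f u1" "v2 \<in> lim_subdiff f u2" for u1 v1 u2 v2
      using convex_on_lim_subdiff_monotone[OF cv that] .
    show "\<exists>p. x - p \<in> lim_subdiff f p" for x
      using convex_on_prox_point_exists[OF cv v'] reg_subdiff_subset_lim_subdiff by blast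
  qed
  then show ?thesis
    using z unfolding second_subdiff_def by (rule lim_coderiv_inner_nonneg)
qed

section \<open>Lower-C2 functions\<close>

(* The data of lower_C2 on a closed ball around c, with uniform bounds G on the gradients and
   M on the Hessians, which compactness of T \<times> cball c r provides. *)
locale C2_max_family =
  fixes f :: "'n::finite vec \<Rightarrow> real" and T :: "'t set"
    and ft :: "'t \<Rightarrow> 'n vec \<Rightarrow> real" and g :: "'t \<Rightarrow> 'n vec \<Rightarrow> 'n vec"
    and H :: "'t \<Rightarrow> 'n vec \<Rightarrow> 'n vec \<Rightarrow> 'n vec"
    and c :: "'n vec" and r G M :: real
  assumes radius_pos: "0 < r"
    and has_derivative_member:
      "\<And>t x. t \<in> T \<Longrightarrow> x \<in> cball c r \<Longrightarrow> (ft t has_derivative (\<lambda>h. g t x \<bullet> h)) (at x)"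
    and has_derivative_gradient:
      "\<And>t x. t \<in> T \<Longrightarrow> x \<in> cball c r \<Longrightarrow> (g t has_derivative H t x) (at x)"
    and gradient_bound: "\<And>t x. t \<in> T \<Longrightarrow> x \<in> cball c r \<Longrightarrow> norm (g t x) \<le> G"
    and hessian_bound: "\<And>t x h. t \<in> T \<Longrightarrow> x \<in> cball c r \<Longrightarrow> norm (H t x h) \<le> M * norm h"
    and member_le: "\<And>t x. t \<in> T \<Longrightarrow> x \<in> cball c r \<Longrightarrow> ft t x \<le> f x"
    and max_attained: "\<And>x. x \<in> cball c r \<Longrightarrow> \<exists>t\<in>T. ft t x = f x"
begin

lemma center_in_cball: "c \<in> cball c r"
  using radius_pos by simp

lemma bounds_nonneg: "0 \<le> G" "0 \<le> M"
proof -
  obtain t where t: "t \<in> T" using max_attained[OF center_in_cball] by blast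
  show "0 \<le> G" using gradient_bound[OF t center_in_cball] norm_ge_zero order_trans by blast
  have "0 \<le> M * norm (1 :: 'n vec)"
    using hessian_bound[OF t center_in_cball, of 1] norm_ge_zero order_trans by blast
  moreover have "0 < norm (1 :: 'n vec)" by (simp add: vec_eq_iff)
  ultimately show "0 \<le> M" by (simp add: zero_le_mult_iff)
qed

lemma gradient_lipschitz:
  assumes t: "t \<in> T" and x: "x \<in> cball c r" and y: "y \<in> cball c r"
  shows "norm (g t x - g t y) \<le> M * norm (x - y)"
proof (rule differentiable_bound[OF convex_cball _ _ x y])
  fix z assume z: "z \<in> cball c r"
  show "(g t has_derivative H t z) (at z within cball c r)"
    using has_derivative_gradient[OF t z] by (rule has_derivative_at_withinI)
  show "onorm (H t z) \<le> M"
    by (rule onorm_le) (rule hessian_bound[OF t z])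
qed

lemma member_lipschitz:
  assumes t: "t \<in> T" and x: "x \<in> cball c r" and y: "y \<in> cball c r"
  shows "ft t x - ft t y \<le> G * norm (x - y)"
proof -
  have "norm (ft t x - ft t y) \<le> G * norm (x - y)"
  proof (rule differentiable_bound[OF convex_cball _ _ x y])
    fix z assume z: "z \<in> cball c r"
    show "(ft t has_derivative (\<lambda>h. g t z \<bullet> h)) (at z within cball c r)"
      using has_derivative_member[OF t z] by (rule has_derivative_at_withinI)
    show "onorm (\<lambda>h. g t z \<bullet> h) \<le> G"
    proof (rule onorm_le)
      fix h
      show "norm (g t z \<bullet> h) \<le> G * norm h"
        using Cauchy_Schwarz_ineq2[of "g t z" h] gradient_bound[OF t z]
        by (simp add: mult_right_mono order_trans)
    qed
  qed
  then show ?thesis by simp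
qed

lemma member_quadratic_minorant:
  assumes t: "t \<in> T" and u: "u \<in> cball c r" and x: "x \<in> cball c r"
  shows "ft t u + g t u \<bullet> (x - u) - M * (norm (x - u))\<^sup>2 \<le> ft t x"
proof -
  have seg: "closed_segment u x \<subseteq> cball c r"
    using u x by (simp add: closed_segment_subset convex_cball)
  have "norm ((ft t x - g t u \<bullet> x) - (ft t u - g t u \<bullet> u)) \<le> (M * norm (x - u)) * norm (x - u)"
  proof (rule differentiable_bound[OF convex_closed_segment,
        where f' = "\<lambda>z h. g t z \<bullet> h - g t u \<bullet> h"])
    fix z assume z: "z \<in> closed_segment u x"
    then have zc: "z \<in> cball c r" using seg by auto
    show "((\<lambda>y. ft t y - g t u \<bullet> y) has_derivative (\<lambda>h. g t z \<bullet> h - g t u \<bullet> h))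
        (at z within closed_segment u x)"
      using has_derivative_diff[OF has_derivative_member[OF t zc]
          bounded_linear_imp_has_derivative[OF bounded_linear_inner_right]]
      by (rule has_derivative_at_withinI)
    have "norm (g t z - g t u) \<le> M * norm (z - u)"
      by (rule gradient_lipschitz[OF t zc u])
    also have "\<dots> \<le> M * norm (x - u)"
      using segment_bound1[OF z] bounds_nonneg(2) by (rule mult_left_mono)
    finally have "norm (g t z - g t u) \<le> M * norm (x - u)" .
    then show "onorm (\<lambda>h. g t z \<bullet> h - g t u \<bullet> h) \<le> M * norm (x - u)"
    proof (intro onorm_le)
      fix h
      have "norm (g t z \<bullet> h - g t u \<bullet> h) \<le> norm (g t z - g t u) * norm h"
        using Cauchy_Schwarz_ineq2[of "g t z - g t u" h] by (simp add: inner_diff_left)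
      also have "\<dots> \<le> M * norm (x - u) * norm h"
        using \<open>norm (g t z - g t u) \<le> M * norm (x - u)\<close> by (rule mult_right_mono) simp
      finally show "norm (g t z \<bullet> h - g t u \<bullet> h) \<le> M * norm (x - u) * norm h" .
    qed
  qed auto
  then show ?thesis
    by (simp add: inner_diff_right power2_eq_square abs_le_iff algebra_simps)
qed

lemma lipschitz:
  assumes x: "x \<in> cball c r" and y: "y \<in> cball c r"
  shows "\<bar>f x - f y\<bar> \<le> G * norm (x - y)"
proof -
  have "f a - f b \<le> G * norm (a - b)" if a: "a \<in> cball c r" and b: "b \<in> cball c r" for a b
  proof -
    obtain t where t: "t \<in> T" "ft t a = f a" using max_attained[OF a] by blast
    then show ?thesis using member_le[OF t(1) b] member_lipschitz[OF t(1) a b] by simp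
  qed
  from this[OF x y] this[OF y x] show ?thesis by (simp add: norm_minus_commute abs_le_iff)
qed

lemma isCont_center: "isCont f c"
proof -
  have "G-lipschitz_on (cball c r) f"
    using lipschitz bounds_nonneg(1)
    by (intro lipschitz_onI) (simp_all add: dist_norm dist_real_def)
  then have "continuous_on (ball c r) f"
    by (rule continuous_on_subset[OF lipschitz_on_continuous_on]) auto
  then show ?thesis
    by (metis centre_in_ball continuous_on_eq_continuous_at open_ball radius_pos)
qed

lemma reg_subdiff_center_nonempty: "\<exists>v. v \<in> reg_subdiff f c"
proof -
  obtain t where t: "t \<in> T" "ft t c = f c" using max_attained[OF center_in_cball] by blast
  have "\<forall>\<^sub>F y in at c. y \<in> cball c r"
    using eventually_at_in_open'[OF open_ball, of c c r] radius_pos by (auto elim: eventually_mono)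
  then have "\<forall>\<^sub>F y in at c. ft t y \<le> f y"
    by (rule eventually_mono) (use member_le[OF t(1)] in auto)
  then have "g t c \<in> reg_subdiff f c"
    using has_derivative_member[OF t(1) center_in_cball] t(2)
    by (intro reg_subdiff_of_differentiable_minorant)
  then show ?thesis ..
qed


lemma convex_on_add_quadratic: "convex_on (cball c r) (\<lambda>x. f x + M * (norm x)\<^sup>2)"
proof (rule convex_on_if_affine_minorants[OF convex_cball])
  fix w assume w: "w \<in> cball c r"
  obtain t where t: "t \<in> T" "ft t w = f w" using max_attained[OF w] by blast
  have "f w + M * (norm w)\<^sup>2 + (g t w + (2 * M) *\<^sub>R w) \<bullet> (x - w) \<le> f x + M * (norm x)\<^sup>2"
    if x: "x \<in> cball c r" for x
  proof -
    have "M * (norm x)\<^sup>2 = M * (norm w)\<^sup>2 + 2 * M * (w \<bullet> (x - w)) + M * (norm (x - w))\<^sup>2"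
      using arg_cong[OF power2_norm_add[of w "x - w"], of "\<lambda>s. M * s"] by (simp add: algebra_simps)
    then show ?thesis
      using member_quadratic_minorant[OF t(1) w x] member_le[OF t(1) x] t(2)
      by (simp add: inner_add_left)
  qed
  then show "\<exists>D. \<forall>x\<in>cball c r. f w + M * (norm w)\<^sup>2 + D \<bullet> (x - w) \<le> f x + M * (norm x)\<^sup>2"
    by blast
qed

lemma reg_subdiff_quadratic_minorant:
  assumes u: "u \<in> cball c r" and v: "v \<in> reg_subdiff f u" and x: "x \<in> cball c r"
  shows "f u + v \<bullet> (x - u) - M * (norm (x - u))\<^sup>2 \<le> f x"
proof -
  have expand:
    "M * (norm y)\<^sup>2 = M * (norm u)\<^sup>2 + (2 * M) *\<^sub>R u \<bullet> (y - u) + M * (norm (y - u))\<^sup>2" for y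
  proof -
    have "M * (norm y)\<^sup>2 = M * (norm u)\<^sup>2 + 2 * M * (u \<bullet> (y - u)) + M * (norm (y - u))\<^sup>2"
      using arg_cong[OF power2_norm_add[of u "y - u"], of "\<lambda>s. M * s"] by (simp add: algebra_simps)
    then show ?thesis by (simp only: inner_scaleR_left)
  qed
  have "v + (2 * M) *\<^sub>R u \<in> reg_subdiff (\<lambda>y. f y + M * (norm y)\<^sup>2) u"
  proof (rule reg_subdiff_add_affine_minorized[OF v])
    fix y
    have "0 \<le> M * (norm (y - u))\<^sup>2" using bounds_nonneg(2) by simp
    then show "M * (norm u)\<^sup>2 + (2 * M) *\<^sub>R u \<bullet> (y - u) \<le> M * (norm y)\<^sup>2"
      using expand[of y] by linarith
  qed
  from convex_on_reg_subdiff_ineq[OF convex_on_add_quadratic u x this]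
  have "f u + M * (norm u)\<^sup>2 + v \<bullet> (x - u) + (2 * M) *\<^sub>R u \<bullet> (x - u) \<le> f x + M * (norm x)\<^sup>2"
    by (simp only: inner_add_left add.assoc)
  then show ?thesis using expand[of x] by linarith
qed

lemma reg_subdiff_norm_le_bound:
  assumes u: "u \<in> ball c r" and v: "v \<in> reg_subdiff f u"
  shows "norm v \<le> G"
proof (rule reg_subdiff_norm_le[OF v])
  have "\<forall>\<^sub>F y in at u. y \<in> ball c r" by (rule eventually_at_in_open'[OF open_ball u])
  then show "\<forall>\<^sub>F y in at u. f y \<le> f u + G * norm (y - u)"
  proof (rule eventually_mono)
    fix y assume "y \<in> ball c r"
    then show "f y \<le> f u + G * norm (y - u)" using lipschitz[of y u] u by (simp add: abs_le_iff)
  qed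
qed

lemma lim_subdiff_norm_le_bound:
  assumes u: "u \<in> ball c r" and v: "v \<in> lim_subdiff f u"
  shows "norm v \<le> G"
proof -
  from v obtain us vs where us: "us \<longlonglongrightarrow> u" and vs: "vs \<longlonglongrightarrow> v"
    and reg: "\<And>k. vs k \<in> reg_subdiff f (us k)"
    unfolding lim_subdiff_def by blast
  have "\<forall>\<^sub>F k in sequentially. us k \<in> ball c r"
    by (rule topological_tendstoD[OF us open_ball u])
  then have "\<forall>\<^sub>F k in sequentially. norm (vs k) \<le> G"
    by (rule eventually_mono) (use reg_subdiff_norm_le_bound reg in blast)
  with tendsto_norm[OF vs] show ?thesis
    by (rule tendsto_upperbound) simp
qed

lemma lim_subdiff_quadratic_minorant:
  assumes u: "u \<in> ball c r" and v: "v \<in> lim_subdiff f u" and x: "x \<in> cball c r"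
  shows "f u + v \<bullet> (x - u) - M * (norm (x - u))\<^sup>2 \<le> f x"
proof -
  from v obtain us vs where us: "us \<longlonglongrightarrow> u" and fu: "(\<lambda>k. f (us k)) \<longlonglongrightarrow> f u"
    and vs: "vs \<longlonglongrightarrow> v" and reg: "\<And>k. vs k \<in> reg_subdiff f (us k)"
    unfolding lim_subdiff_def by blast
  have "\<forall>\<^sub>F k in sequentially. us k \<in> ball c r"
    by (rule topological_tendstoD[OF us open_ball u])
  then have "\<forall>\<^sub>F k in sequentially. f (us k) + vs k \<bullet> (x - us k) - M * (norm (x - us k))\<^sup>2 \<le> f x"
    by (rule eventually_mono) (use reg_subdiff_quadratic_minorant reg x in auto)
  moreover have "(\<lambda>k. f (us k) + vs k \<bullet> (x - us k) - M * (norm (x - us k))\<^sup>2)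
      \<longlonglongrightarrow> f u + v \<bullet> (x - u) - M * (norm (x - u))\<^sup>2"
    by (intro tendsto_intros fu vs us)
  ultimately show ?thesis
    using tendsto_upperbound trivial_limit_sequentially by blast
qed

end

lemma compact_uniform_linear_bound:
  fixes L :: "'k::topological_space \<Rightarrow> 'a::euclidean_space \<Rightarrow> 'b::real_normed_vector"
  assumes K: "compact K" and cont: "\<And>h. continuous_on K (\<lambda>k. L k h)"
    and lin: "\<And>k. k \<in> K \<Longrightarrow> linear (L k)"
  obtains B where "\<And>k h. k \<in> K \<Longrightarrow> norm (L k h) \<le> B * norm h"
proof -
  have "\<exists>B. \<forall>k\<in>K. norm (L k i) \<le> B" for i
    using compact_imp_bounded[OF compact_continuous_image[OF cont K]] by (auto simp: bounded_iff)
  then obtain B where B: "\<And>i k. k \<in> K \<Longrightarrow> norm (L k i) \<le> B i" by metis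
  have "norm (L k h) \<le> (\<Sum>i\<in>Basis. \<bar>B i\<bar>) * norm h" if k: "k \<in> K" for k h
  proof -
    have "L k h = L k (\<Sum>i\<in>Basis. (h \<bullet> i) *\<^sub>R i)"
      by (simp add: euclidean_representation)
    also have "\<dots> = (\<Sum>i\<in>Basis. (h \<bullet> i) *\<^sub>R L k i)"
      using lin[OF k] by (simp add: linear_sum linear_scale)
    finally have "norm (L k h) \<le> (\<Sum>i\<in>Basis. norm ((h \<bullet> i) *\<^sub>R L k i))"
      by (metis norm_sum)
    also have "\<dots> = (\<Sum>i\<in>Basis. \<bar>h \<bullet> i\<bar> * norm (L k i))"
      by simp
    also have "\<dots> \<le> (\<Sum>i\<in>Basis. norm h * \<bar>B i\<bar>)"
    proof (rule sum_mono)
      fix i :: 'a assume "i \<in> Basis"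
      then show "\<bar>h \<bullet> i\<bar> * norm (L k i) \<le> norm h * \<bar>B i\<bar>"
        using Basis_le_norm B[OF k, of i] by (intro mult_mono) auto
    qed
    finally show ?thesis by (simp add: sum_distrib_left mult.commute)
  qed
  then show ?thesis using that by blast
qed

lemma lower_C2_local_family:
  fixes f :: "'n::finite vec \<Rightarrow> real"
  assumes "lower_C2 TYPE('t::topological_space) f"
  obtains r G M and T :: "'t::topological_space set" and ft g H
  where "C2_max_family f T ft g H x r G M"
proof -
  from assms obtain V and T :: "'t set" and ft g H where
    V: "open V" "x \<in> V" and T: "compact T"
    and der: "\<forall>t\<in>T. \<forall>y\<in>V.
      (ft t has_derivative (\<lambda>h. g t y \<bullet> h)) (at y) \<and> (g t has_derivative H t y) (at y)"
    and cont_g: "continuous_on (T \<times> V) (\<lambda>(t, y). g t y)"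
    and cont_H: "\<forall>h. continuous_on (T \<times> V) (\<lambda>(t, y). H t y h)"
    and max: "\<forall>y\<in>V. (\<forall>t\<in>T. ft t y \<le> f y) \<and> (\<exists>t\<in>T. ft t y = f y)"
    using assms[unfolded lower_C2_def, THEN spec[of _ x]] by (elim exE conjE) blast
  obtain r where r: "0 < r" and rV: "cball x r \<subseteq> V" using V open_contains_cball by blast
  define K where "K = T \<times> cball x r"
  have K: "compact K" "K \<subseteq> T \<times> V" using T rV by (auto simp: K_def intro: compact_Times)
  have "bounded ((\<lambda>(t, y). g t y) ` K)"
    by (intro compact_imp_bounded compact_continuous_image
        continuous_on_subset[OF cont_g K(2)] K(1))
  then obtain G where G: "\<And>t y. t \<in> T \<Longrightarrow> y \<in> cball x r \<Longrightarrow> norm (g t y) \<le> G"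
    unfolding bounded_iff K_def by fastforce
  have cont_HK: "continuous_on K (\<lambda>k. H (fst k) (snd k) h)" for h
    using continuous_on_subset[OF cont_H[rule_format, of h] K(2)] by (simp add: case_prod_beta')
  have lin_HK: "linear (H (fst k) (snd k))" if "k \<in> K" for k
  proof -
    have "(g (fst k) has_derivative H (fst k) (snd k)) (at (snd k))"
      using der that rV by (auto simp: K_def mem_Times_iff)
    then show ?thesis by (rule has_derivative_linear)
  qed
  obtain M where "\<And>k h. k \<in> K \<Longrightarrow> norm (H (fst k) (snd k) h) \<le> M * norm h"
    using compact_uniform_linear_bound[OF K(1) cont_HK lin_HK] by blast
  then have M: "\<And>t y h. t \<in> T \<Longrightarrow> y \<in> cball x r \<Longrightarrow> norm (H t y h) \<le> M * norm h"
    by (fastforce simp: K_def)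
  have "C2_max_family f T ft g H x r G M"
    using r der rV max G M by unfold_locales (auto simp: subset_iff)
  then show ?thesis by (rule that)
qed

lemma power_inner_self_has_derivative:
  fixes m x :: "'a::real_inner"
  shows "((\<lambda>u. A * ((u - m) \<bullet> (u - m)) ^ N) has_derivative
      (\<lambda>h. (2 * A * real N * ((x - m) \<bullet> (x - m)) ^ (N - 1)) * ((x - m) \<bullet> h))) (at x)"
  by (auto intro!: derivative_eq_intros simp: inner_commute algebra_simps)

context
  fixes f :: "'n::finite vec \<Rightarrow> real"
  assumes lower_C2: "lower_C2 TYPE('t::topological_space) f"
begin

lemma lower_C2_continuous: "continuous_on UNIV f"
proof (rule continuous_at_imp_continuous_on, intro ballI)
  fix x
  obtain r G M and T :: "'t set" and ft g H where "C2_max_family f T ft g H x r G M"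
    using lower_C2_local_family[OF lower_C2] .
  then show "isCont f x" by (rule C2_max_family.isCont_center)
qed

lemma lower_C2_lim_subdiff_nonempty: "\<exists>v. v \<in> lim_subdiff f u"
proof -
  obtain r G M and T :: "'t set" and ft g H where "C2_max_family f T ft g H u r G M"
    using lower_C2_local_family[OF lower_C2] .
  then show ?thesis
    using C2_max_family.reg_subdiff_center_nonempty reg_subdiff_subset_lim_subdiff by blast
qed

lemma lower_C2_lim_subdiff_quadratic_minorant:
  assumes v: "v \<in> lim_subdiff f u"
  obtains M where "\<forall>\<^sub>F x in nhds u. f u + v \<bullet> (x - u) - M * (norm (x - u))\<^sup>2 \<le> f x"
proof -
  obtain r G M and T :: "'t set" and ft g H where fam: "C2_max_family f T ft g H u r G M"
    using lower_C2_local_family[OF lower_C2] .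
  have u: "u \<in> ball u r" using C2_max_family.radius_pos[OF fam] by simp
  have "\<forall>\<^sub>F x in nhds u. x \<in> ball u r"
    using eventually_nhds_in_open[OF open_ball u] .
  then have "\<forall>\<^sub>F x in nhds u. f u + v \<bullet> (x - u) - M * (norm (x - u))\<^sup>2 \<le> f x"
    by (rule eventually_mono) (use C2_max_family.lim_subdiff_quadratic_minorant[OF fam u v] in auto)
  then show ?thesis by (rule that)
qed

lemma lower_C2_lim_subdiff_bounded:
  assumes K: "compact K"
  obtains B where "\<And>u v. u \<in> K \<Longrightarrow> v \<in> lim_subdiff f u \<Longrightarrow> norm v \<le> B"
proof -
  have "\<exists>\<rho> B. 0 < \<rho> \<and> (\<forall>u\<in>ball x \<rho>. \<forall>v\<in>lim_subdiff f u. norm v \<le> B)" for x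
  proof -
    obtain r G M and T :: "'t set" and ft g H where fam: "C2_max_family f T ft g H x r G M"
      using lower_C2_local_family[OF lower_C2] .
    then show ?thesis
      using C2_max_family.lim_subdiff_norm_le_bound[OF fam] C2_max_family.radius_pos[OF fam]
      by blast
  qed
  then obtain \<rho> B where \<rho>: "\<And>x. 0 < \<rho> x"
    and B: "\<And>x u v. u \<in> ball x (\<rho> x) \<Longrightarrow> v \<in> lim_subdiff f u \<Longrightarrow> norm v \<le> B x"
    by metis
  obtain C where C: "C \<subseteq> K" "finite C" "K \<subseteq> (\<Union>x\<in>C. ball x (\<rho> x))"
    using compactE_image[OF K, of K "\<lambda>x. ball x (\<rho> x)"] \<rho> by force
  have "norm v \<le> (\<Sum>x\<in>C. \<bar>B x\<bar>)" if "u \<in> K" "v \<in> lim_subdiff f u" for u v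
  proof -
    obtain x where x: "x \<in> C" "u \<in> ball x (\<rho> x)" using C(3) \<open>u \<in> K\<close> by blast
    have "norm v \<le> \<bar>B x\<bar>" using B[OF x(2) \<open>v \<in> lim_subdiff f u\<close>] by linarith
    also have "\<dots> \<le> (\<Sum>x\<in>C. \<bar>B x\<bar>)" by (rule member_le_sum[OF x(1) _ C(2)]) simp
    finally show ?thesis .
  qed
  then show ?thesis by (rule that)
qed

lemma lower_C2_compact_gph_lim_subdiff:
  assumes K: "compact K"
  shows "compact (gph (lim_subdiff f) \<inter> K \<times> UNIV)"
proof (subst compact_eq_bounded_closed, intro conjI)
  show "closed (gph (lim_subdiff f) \<inter> K \<times> UNIV)"
    using gph_lim_subdiff_eq_closure[OF lower_C2_continuous] compact_imp_closed[OF K]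
    by (intro closed_Int closed_Times) auto
  obtain B where B: "\<And>u v. u \<in> K \<Longrightarrow> v \<in> lim_subdiff f u \<Longrightarrow> norm v \<le> B"
    using lower_C2_lim_subdiff_bounded[OF K] by blast
  have "bounded (K \<times> cball 0 B)"
    using compact_imp_bounded[OF K] by (intro bounded_Times) auto
  moreover have "gph (lim_subdiff f) \<inter> K \<times> UNIV \<subseteq> K \<times> cball 0 B"
    using B by (auto simp: gph_def)
  ultimately show "bounded (gph (lim_subdiff f) \<inter> K \<times> UNIV)"
    by (rule bounded_subset)
qed


lemma lower_C2_lim_subdiff_affine_bounded:
  assumes K: "compact K"
  obtains C where "\<And>u v. u \<in> K \<Longrightarrow> v \<in> lim_subdiff f u \<Longrightarrow> f u + v \<bullet> (m - u) \<le> C"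
proof -
  let ?S = "gph (lim_subdiff f) \<inter> K \<times> UNIV"
  have "continuous_on ?S (\<lambda>p. f (fst p) + snd p \<bullet> (m - fst p))"
    by (intro continuous_intros continuous_on_compose2[OF lower_C2_continuous]) auto
  then have "bounded ((\<lambda>p. f (fst p) + snd p \<bullet> (m - fst p)) ` ?S)"
    by (intro compact_imp_bounded compact_continuous_image lower_C2_compact_gph_lim_subdiff K)
  then obtain C where "\<And>p. p \<in> ?S \<Longrightarrow> \<bar>f (fst p) + snd p \<bullet> (m - fst p)\<bar> \<le> C"
    unfolding bounded_iff by auto
  then show ?thesis using that by (force simp: gph_def abs_le_iff)
qed

lemma lower_C2_graph_local_max:
  assumes \<beta>: "continuous_on UNIV \<beta>" and v0: "v0 \<in> lim_subdiff f u0" and u0: "u0 \<in> cball m R"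
    and sphere: "\<And>u v. u \<in> sphere m R \<Longrightarrow> v \<in> lim_subdiff f u \<Longrightarrow>
      f u + v \<bullet> (m - u) - \<beta> u < f u0 + v0 \<bullet> (m - u0) - \<beta> u0"
  obtains ub vb where "vb \<in> lim_subdiff f ub"
    "f u0 + v0 \<bullet> (m - u0) - \<beta> u0 \<le> f ub + vb \<bullet> (m - ub) - \<beta> ub"
    "\<forall>\<^sub>F p in at (ub, vb) within gph (lim_subdiff f).
       f (fst p) + snd p \<bullet> (m - fst p) - \<beta> (fst p) \<le> f ub + vb \<bullet> (m - ub) - \<beta> ub"
proof -
  define \<Phi> where "\<Phi> p = f (fst p) + snd p \<bullet> (m - fst p) - \<beta> (fst p)" for p
  define S where "S = gph (lim_subdiff f) \<inter> cball m R \<times> UNIV"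
  have "continuous_on S \<Phi>"
    unfolding \<Phi>_def
    by (intro continuous_intros continuous_on_compose2[OF lower_C2_continuous]
        continuous_on_compose2[OF \<beta>]) auto
  moreover have "(u0, v0) \<in> S" using v0 u0 by (simp add: S_def gph_def)
  ultimately obtain pb where pb: "pb \<in> S" and pmax: "\<And>p. p \<in> S \<Longrightarrow> \<Phi> p \<le> \<Phi> pb"
    using continuous_attains_sup[OF lower_C2_compact_gph_lim_subdiff[OF compact_cball]]
    unfolding S_def by blast
  obtain ub vb where pb_eq: "pb = (ub, vb)" by (cases pb)
  have vb: "vb \<in> lim_subdiff f ub" and ub: "ub \<in> cball m R"
    using pb by (auto simp: pb_eq S_def gph_def)
  have high: "\<Phi> (u0, v0) \<le> \<Phi> pb" using pmax \<open>(u0, v0) \<in> S\<close> .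
  have "ub \<in> interior (cball m R)"
  proof (rule ccontr)
    assume "ub \<notin> interior (cball m R)"
    then have "ub \<in> sphere m R" using ub by auto
    then show False using sphere[OF _ vb] high by (simp add: \<Phi>_def pb_eq)
  qed
  then have "\<forall>\<^sub>F p in at pb within gph (lim_subdiff f). \<Phi> p \<le> \<Phi> pb"
    using pmax by (intro eventually_le_at_within_if_max_near[where K = "cball m R"])
      (auto simp: S_def pb_eq)
  with vb high show ?thesis
    using that[of vb ub] by (simp add: \<Phi>_def pb_eq)
qed

lemma lower_C2_penalized_local_max:
  assumes v0: "v0 \<in> lim_subdiff f u0" and gap: "f m < f u0 + v0 \<bullet> (m - u0)"
  obtains A N ub vb where "0 < A" "0 < N" "ub \<noteq> m" "vb \<in> lim_subdiff f ub"
    "\<forall>\<^sub>F p in at (ub, vb) within gph (lim_subdiff f).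
       f (fst p) + snd p \<bullet> (m - fst p) - A * ((fst p - m) \<bullet> (fst p - m)) ^ N
         \<le> f ub + vb \<bullet> (m - ub) - A * ((ub - m) \<bullet> (ub - m)) ^ N"
proof -
  define \<delta> where "\<delta> = f u0 + v0 \<bullet> (m - u0) - f m"
  have \<delta>: "0 < \<delta>" using gap by (simp add: \<delta>_def)
  define s0 where "s0 = (u0 - m) \<bullet> (u0 - m)"
  have s0: "0 < s0" using gap by (auto simp: s0_def)
  define R where "R = 2 * norm (u0 - m)"
  obtain C where C: "\<And>u v. u \<in> cball m R \<Longrightarrow> v \<in> lim_subdiff f u \<Longrightarrow> f u + v \<bullet> (m - u) \<le> C"
    using lower_C2_lim_subdiff_affine_bounded[OF compact_cball] by blast
  obtain N :: nat where N: "0 < N" "C - f m < \<delta> / 2 * 4 ^ N"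
    using exists_power_four_dominates[OF \<delta>] by blast
  (* The penalty is \<delta>/2 at u0 but \<delta>/2 * 4^N on the sphere of radius R = 2 |u0 - m|. *)
  define A where "A = \<delta> / (2 * s0 ^ N)"
  define \<beta> where "\<beta> u = A * ((u - m) \<bullet> (u - m)) ^ N" for u
  have \<beta>_u0: "f u0 + v0 \<bullet> (m - u0) - \<beta> u0 = f m + \<delta> / 2"
    using s0 by (simp add: \<beta>_def A_def s0_def[symmetric] \<delta>_def field_simps)
  have sphere: "f u + v \<bullet> (m - u) - \<beta> u < f u0 + v0 \<bullet> (m - u0) - \<beta> u0"
    if u: "u \<in> sphere m R" and v: "v \<in> lim_subdiff f u" for u v
  proof -
    have "(u - m) \<bullet> (u - m) = 4 * s0"
      using u by (simp add: dist_norm norm_minus_commute R_def s0_def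
          power2_norm_eq_inner[symmetric] power_mult_distrib)
    then have "\<beta> u = \<delta> / 2 * 4 ^ N"
      using s0 by (simp add: \<beta>_def A_def power_mult_distrib)
    then show ?thesis using C[OF _ v] u N(2) \<beta>_u0 \<delta> by force
  qed
  have "continuous_on UNIV \<beta>" unfolding \<beta>_def by (intro continuous_intros)
  moreover have "u0 \<in> cball m R" by (simp add: R_def dist_norm norm_minus_commute)
  ultimately obtain ub vb where vb: "vb \<in> lim_subdiff f ub"
    and high: "f u0 + v0 \<bullet> (m - u0) - \<beta> u0 \<le> f ub + vb \<bullet> (m - ub) - \<beta> ub"
    and max: "\<forall>\<^sub>F p in at (ub, vb) within gph (lim_subdiff f).
       f (fst p) + snd p \<bullet> (m - fst p) - \<beta> (fst p) \<le> f ub + vb \<bullet> (m - ub) - \<beta> ub"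
    using lower_C2_graph_local_max[OF _ v0 _ sphere] by blast
  have "ub \<noteq> m" using high \<beta>_u0 \<delta> N(1) by (auto simp: \<beta>_def zero_power)
  moreover have "0 < A" using \<delta> s0 by (simp add: A_def)
  ultimately show ?thesis using that N(1) vb max by (simp add: \<beta>_def)
qed

lemma lower_C2_convex_if_combined_second_subdiff_nonneg:
  assumes psd: "\<And>u v w z. v \<in> lim_subdiff f u \<Longrightarrow> z \<in> combined_second_subdiff f u v w \<Longrightarrow> 0 \<le> z \<bullet> w"
  shows "convex_on UNIV f"
proof (rule convex_on_if_affine_minorants[OF convex_UNIV], rule ccontr)
  fix u0 assume no_minorant: "\<nexists>D. \<forall>x\<in>UNIV. f u0 + D \<bullet> (x - u0) \<le> f x"
  obtain v0 where v0: "v0 \<in> lim_subdiff f u0" using lower_C2_lim_subdiff_nonempty by blast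
  then obtain m where gap: "f m < f u0 + v0 \<bullet> (m - u0)" using no_minorant by (meson UNIV_I not_le)
  obtain A N ub vb where A: "0 < A" and N: "0 < N" and "ub \<noteq> m" and vb: "vb \<in> lim_subdiff f ub"
    and max: "\<forall>\<^sub>F p in at (ub, vb) within gph (lim_subdiff f).
       f (fst p) + snd p \<bullet> (m - fst p) - A * ((fst p - m) \<bullet> (fst p - m)) ^ N
         \<le> f ub + vb \<bullet> (m - ub) - A * ((ub - m) \<bullet> (ub - m)) ^ N"
    using lower_C2_penalized_local_max[OF v0 gap] by blast
  obtain M where minor: "\<forall>\<^sub>F x in nhds ub. f ub + vb \<bullet> (x - ub) - M * (norm (x - ub))\<^sup>2 \<le> f x"
    using lower_C2_lim_subdiff_quadratic_minorant[OF vb] by blast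
  define c where "c = 2 * A * real N * ((ub - m) \<bullet> (ub - m)) ^ (N - 1)"
  have "((\<lambda>u. A * ((u - m) \<bullet> (u - m)) ^ N) has_derivative (\<lambda>h. - ((- c *\<^sub>R (ub - m)) \<bullet> h))) (at ub)"
    using power_inner_self_has_derivative[of A m N ub] by (simp add: c_def)
  then have "- c *\<^sub>R (ub - m) \<in> combined_second_subdiff f ub vb (ub - m)"
    using max by (intro combined_second_subdiff_at_local_max[OF _ _ minor]) simp_all
  from psd[OF vb this] have "0 \<le> - c * ((ub - m) \<bullet> (ub - m))" by simp
  moreover have "0 < c * ((ub - m) \<bullet> (ub - m))" using A N \<open>ub \<noteq> m\<close> by (simp add: c_def)
  ultimately show False by linarith
qed

end

theorem theorem4p1:
  fixes f :: "real ^ 'n \<Rightarrow> real"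
  assumes "lower_C2 TYPE('t::topological_space) f"
  shows "(convex_on UNIV f \<longleftrightarrow>
           (\<forall>u v w z. v \<in> lim_subdiff f u \<longrightarrow> z \<in> second_subdiff f u v w \<longrightarrow> z \<bullet> w \<ge> 0))
       \<and> (convex_on UNIV f \<longleftrightarrow>
           (\<forall>u v w z. v \<in> lim_subdiff f u \<longrightarrow> z \<in> combined_second_subdiff f u v w \<longrightarrow> z \<bullet> w \<ge> 0))"
proof -
  let ?ii = "\<forall>u v w z. v \<in> lim_subdiff f u \<longrightarrow> z \<in> second_subdiff f u v w \<longrightarrow> z \<bullet> w \<ge> 0"
  let ?iii = "\<forall>u v w z. v \<in> lim_subdiff f u \<longrightarrow> z \<in> combined_second_subdiff f u v w \<longrightarrow> z \<bullet> w \<ge> 0"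
  have "convex_on UNIV f \<Longrightarrow> ?ii"
    using convex_on_second_subdiff_inner_nonneg by blast
  moreover have "?ii \<Longrightarrow> ?iii"
    using combined_second_subdiff_subset_second_subdiff by blast
  moreover have "?iii \<Longrightarrow> convex_on UNIV f"
    using lower_C2_convex_if_combined_second_subdiff_nonneg[OF assms] by blast
  ultimately show ?thesis by blast
qed

end
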